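(* Let $\Gamma=(G,\sigma)$, $G=(V,E)$, be a signed graph and $f:V\to\mathbb R$ a function not identically zero. Let $x$ be a vertex lying in two distinct weak nodal domains $D$ and $D'$ of $f$. Then the set $$B(x)=\{y\in V:\ \text{there exist } m \text{ and a walk } x=x_0\sim x_1\sim\cdots\sim x_m=y \text{ with } f(x_i)=0 \text{ for } i=0,1,\dots,m-1\}$$ is contained in $D\cup D'$ (as vertex sets). In particular, $\{y\in V: y\sim x\}\subseteq D\cup D'$.
   Context: A signed graph is a finite simple undirected graph $G=(V,E)$ with $\sigma:E\to\{+1,-1\}$. A walk is $y_1,\dots,y_m$ ($m\ge2$) with consecutive vertices adjacent. For $f:V\to\mathbb R$, a W-walk of $f$ is a walk such that for any two consecutive nonzeros $y_i,y_j$ along it ($i<j$, $f(y_i)\ne0\ne f(y_j)$, $f(y_l)=0$ for $i<l<j$) one has $f(y_i)\sigma_{y_iy_{i+1}}\cdots\sigma_{y_{j-1}y_j}f(y_j)>0$. On $\Omega=\{x:f(x)\ne0\}$ the relation "$x=y$ or a W-walk connects $x$ and $y$" is an equivalence relation with classes $W_1,\dots,W_q$; the weak nodal domains of $f$ are the induced subgraphs on $W_i^0=W_i\cup\{x\in V:\text{there is a W-walk from } x \text{ to some vertex of } W_i\}$. *)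

theory Defs
  imports Complex_Main
begin

definition signed_graph :: "'a set \<Rightarrow> ('a \<Rightarrow> 'a \<Rightarrow> bool) \<Rightarrow> ('a \<Rightarrow> 'a \<Rightarrow> real) \<Rightarrow> bool" where
  "signed_graph V E \<sigma> \<longleftrightarrow> finite V
     \<and> (\<forall>x y. E x y \<longrightarrow> x \<in> V \<and> y \<in> V)
     \<and> (\<forall>x y. E x y \<longrightarrow> E y x)
     \<and> (\<forall>x. \<not> E x x)
     \<and> (\<forall>x y. E x y \<longrightarrow> \<sigma> x y = \<sigma> y x \<and> (\<sigma> x y = 1 \<or> \<sigma> x y = -1))"

definition is_walk :: "('a \<Rightarrow> 'a \<Rightarrow> bool) \<Rightarrow> 'a list \<Rightarrow> bool" where
  "is_walk E ys \<longleftrightarrow> length ys \<ge> 2 \<and> (\<forall>i. Suc i < length ys \<longrightarrow> E (ys ! i) (ys ! Suc i))"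

definition sign_prod :: "('a \<Rightarrow> 'a \<Rightarrow> real) \<Rightarrow> 'a list \<Rightarrow> nat \<Rightarrow> nat \<Rightarrow> real" where
  "sign_prod \<sigma> ys i j = (\<Prod>l\<in>{i..<j}. \<sigma> (ys ! l) (ys ! Suc l))"

definition is_W_walk :: "('a \<Rightarrow> 'a \<Rightarrow> bool) \<Rightarrow> ('a \<Rightarrow> 'a \<Rightarrow> real) \<Rightarrow> ('a \<Rightarrow> real) \<Rightarrow> 'a list \<Rightarrow> bool" where
  "is_W_walk E \<sigma> f ys \<longleftrightarrow> is_walk E ys \<and>
     (\<forall>i j. i < j \<and> j < length ys \<and> f (ys ! i) \<noteq> 0 \<and> f (ys ! j) \<noteq> 0
        \<and> (\<forall>l. i < l \<and> l < j \<longrightarrow> f (ys ! l) = 0)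
        \<longrightarrow> f (ys ! i) * sign_prod \<sigma> ys i j * f (ys ! j) > 0)"

definition W_walk_from_to :: "('a \<Rightarrow> 'a \<Rightarrow> bool) \<Rightarrow> ('a \<Rightarrow> 'a \<Rightarrow> real) \<Rightarrow> ('a \<Rightarrow> real) \<Rightarrow> 'a \<Rightarrow> 'a \<Rightarrow> bool" where
  "W_walk_from_to E \<sigma> f x y \<longleftrightarrow> (\<exists>ys. is_W_walk E \<sigma> f ys \<and> hd ys = x \<and> last ys = y)"

definition W_class :: "'a set \<Rightarrow> ('a \<Rightarrow> 'a \<Rightarrow> bool) \<Rightarrow> ('a \<Rightarrow> 'a \<Rightarrow> real) \<Rightarrow> ('a \<Rightarrow> real) \<Rightarrow> 'a \<Rightarrow> 'a set" where
  "W_class V E \<sigma> f w = {y \<in> V. f y \<noteq> 0 \<and> (y = w \<or> W_walk_from_to E \<sigma> f w y)}"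

definition weak_nodal_domain :: "'a set \<Rightarrow> ('a \<Rightarrow> 'a \<Rightarrow> bool) \<Rightarrow> ('a \<Rightarrow> 'a \<Rightarrow> real) \<Rightarrow> ('a \<Rightarrow> real) \<Rightarrow> 'a set \<Rightarrow> bool" where
  "weak_nodal_domain V E \<sigma> f D \<longleftrightarrow> (\<exists>w \<in> V. f w \<noteq> 0 \<and>
     D = W_class V E \<sigma> f w \<union> {x \<in> V. \<exists>z \<in> W_class V E \<sigma> f w. W_walk_from_to E \<sigma> f x z})"

definition B_set :: "('a \<Rightarrow> 'a \<Rightarrow> bool) \<Rightarrow> ('a \<Rightarrow> real) \<Rightarrow> 'a \<Rightarrow> 'a set" where
  "B_set E f x = {y. \<exists>xs. xs \<noteq> [] \<and> hd xs = x \<and> last xs = y \<and>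
     (\<forall>i. Suc i < length xs \<longrightarrow> E (xs ! i) (xs ! Suc i) \<and> f (xs ! i) = 0)}"

end

theory Submission
  imports Defs
begin

(*
  Switch f along a walk: multiply its value at the i-th vertex by the product of the signs of the
  first i edges.  A walk is a W-walk iff all these switched values lie on one side of 0, i.e. become
  nonnegative after multiplication by a common \<epsilon> \<in> {1, -1}.  Reversing a walk multiplies \<epsilon>
  by the sign of the whole walk, and two walks concatenate when their \<epsilon>'s match at the junction.
  Hence W-walks can be reversed and concatenated through a nonzero vertex, and two walks leaving the
  same vertex with the same \<epsilon> glue into a W-walk between their endpoints.

  If x lies in two distinct weak nodal domains, then f x = 0 (otherwise both classes would be the
  class of x), and x has W-walks into the two classes whose \<epsilon>'s are opposite, since otherwise
  gluing them would connect the classes.  A walk from x through zeros to y is consistent with \<epsilon>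
  or with -\<epsilon>, whatever the sign of f y, and gluing it to the matching walk gives a W-walk from
  y into one of the two classes.
*)

lemma pos_mult_if_consecutive_nonzero_pos:
  fixes g :: "nat \<Rightarrow> real"
  assumes consecutive: "\<And>i j. i < j \<Longrightarrow> j < n \<Longrightarrow> g i \<noteq> 0 \<Longrightarrow> g j \<noteq> 0
      \<Longrightarrow> \<forall>l. i < l \<and> l < j \<longrightarrow> g l = 0 \<Longrightarrow> 0 < g i * g j"
    and "i < j" "j < n" "g i \<noteq> 0" "g j \<noteq> 0"
  shows "0 < g i * g j"
  using assms(2-)
proof (induction "j - i" arbitrary: i j rule: less_induct)
  case less
  show ?case
  proof (cases "\<forall>l. i < l \<and> l < j \<longrightarrow> g l = 0")
    case True
    then show ?thesis
      using consecutive less.prems by blast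
  next
    case False
    then obtain l where "i < l" "l < j" "g l \<noteq> 0"
      by blast
    then have "0 < g i * g l" "0 < g l * g j"
      using less by auto
    then show ?thesis
      by (auto simp: zero_less_mult_iff)
  qed
qed

lemma common_sign_iff_consecutive_nonzero_pos:
  fixes g :: "nat \<Rightarrow> real"
  shows "(\<exists>\<epsilon>\<in>{1, -1}. \<forall>i<n. 0 \<le> \<epsilon> * g i) \<longleftrightarrow>
    (\<forall>i j. i < j \<and> j < n \<and> g i \<noteq> 0 \<and> g j \<noteq> 0 \<and> (\<forall>l. i < l \<and> l < j \<longrightarrow> g l = 0)
      \<longrightarrow> 0 < g i * g j)"
    (is "?common \<longleftrightarrow> ?consecutive")
proof
  assume ?common
  then obtain \<epsilon> where \<epsilon>: "\<epsilon> \<in> {1, -1}" "\<forall>i<n. 0 \<le> \<epsilon> * g i"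
    by blast
  show ?consecutive
  proof (intro allI impI)
    fix i j assume "i < j \<and> j < n \<and> g i \<noteq> 0 \<and> g j \<noteq> 0 \<and> (\<forall>l. i < l \<and> l < j \<longrightarrow> g l = 0)"
    then have "0 < (\<epsilon> * g i) * (\<epsilon> * g j)"
      using \<epsilon> by (auto simp: less_le)
    also have "\<dots> = g i * g j"
      using \<epsilon>(1) by auto
    finally show "0 < g i * g j" .
  qed
next
  assume consecutive: ?consecutive
  show ?common
  proof (cases "\<exists>i0<n. g i0 \<noteq> 0")
    case True
    then obtain i0 where i0: "i0 < n" "g i0 \<noteq> 0"
      by blast
    have "0 \<le> sgn (g i0) * g i" if "i < n" for i
    proof (cases "g i = 0")
      case False
      have pos: "0 < g i * g j" if "i < j" "j < n" "g i \<noteq> 0" "g j \<noteq> 0" for i j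
        using pos_mult_if_consecutive_nonzero_pos[of n g] consecutive that by blast
      have "0 < g i0 * g i"
      proof (cases i0 i rule: linorder_cases)
        case greater
        then show ?thesis
          using pos[of i i0] i0 \<open>i < n\<close> False by (simp add: mult.commute)
      qed (use pos i0 \<open>i < n\<close> False in \<open>auto simp: zero_less_mult_iff\<close>)
      then show ?thesis
        by (auto simp: zero_less_mult_iff)
    qed simp
    moreover have "sgn (g i0) \<in> {1, -1}"
      using i0 by (auto simp: sgn_if)
    ultimately show ?thesis
      by blast
  qed (auto intro: bexI[of _ 1])
qed

section \<open>Switching along a walk\<close>

lemma nth_append_tl:
  assumes "ys \<noteq> []" "last ys = hd zs" "k < length zs"
  shows "(ys @ tl zs) ! (length ys - 1 + k) = zs ! k"
  using assms by (cases ys rule: rev_cases; cases zs) (auto simp: nth_append)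

lemma last_append_tl: "2 \<le> length zs \<Longrightarrow> last (ys @ tl zs) = last zs"
  by (cases zs) auto

lemma is_walk_iff_successively: "is_walk E ys \<longleftrightarrow> 2 \<le> length ys \<and> successively E ys"
  by (simp add: is_walk_def successively_conv_nth)

lemma is_walk_append_tl:
  assumes "successively E ys" "ys \<noteq> []" "is_walk E zs" "last ys = hd zs"
  shows "is_walk E (ys @ tl zs)"
proof -
  have "tl zs \<noteq> []"
    using assms(3) by (cases zs) (auto simp: is_walk_def)
  then have "2 \<le> length (ys @ tl zs)"
    using assms(2) by (cases ys; cases "tl zs") auto
  moreover have "successively E (ys @ tl zs)"
    using assms \<open>tl zs \<noteq> []\<close>
    by (cases zs) (auto simp: is_walk_iff_successively successively_append_iff successively_Cons)
  ultimately show ?thesis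
    by (simp add: is_walk_iff_successively)
qed

lemma sign_prod_empty: "j \<le> i \<Longrightarrow> sign_prod \<sigma> ys i j = 1"
  unfolding sign_prod_def by simp

lemma sign_prod_split:
  "i \<le> j \<Longrightarrow> j \<le> k \<Longrightarrow> sign_prod \<sigma> ys i k = sign_prod \<sigma> ys i j * sign_prod \<sigma> ys j k"
  unfolding sign_prod_def by (simp add: prod.atLeastLessThan_concat)

lemma sign_prod_append_left:
  "j < length ys \<Longrightarrow> sign_prod \<sigma> (ys @ tl zs) i j = sign_prod \<sigma> ys i j"
  unfolding sign_prod_def by (intro prod.cong) (auto simp: nth_append)

lemma sign_prod_append_right:
  assumes "ys \<noteq> []" "last ys = hd zs" "k < length zs"
  shows "sign_prod \<sigma> (ys @ tl zs) (length ys - 1) (length ys - 1 + k) = sign_prod \<sigma> zs 0 k"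
proof -
  have "sign_prod \<sigma> (ys @ tl zs) (length ys - 1) (length ys - 1 + k)
      = (\<Prod>l\<in>{0..<k}.
          \<sigma> ((ys @ tl zs) ! (length ys - 1 + l)) ((ys @ tl zs) ! (length ys - 1 + Suc l)))"
    unfolding sign_prod_def using prod.shift_bounds_nat_ivl[of _ 0 "length ys - 1" k]
    by (simp add: add.commute)
  also have "\<dots> = sign_prod \<sigma> zs 0 k"
    unfolding sign_prod_def
    using nth_append_tl[OF assms(1,2)] assms(3) by (intro prod.cong) (auto simp flip: add_Suc_right)
  finally show ?thesis .
qed

definition switched_along ::
    "('a \<Rightarrow> 'a \<Rightarrow> real) \<Rightarrow> ('a \<Rightarrow> real) \<Rightarrow> 'a list \<Rightarrow> nat \<Rightarrow> real" where
  "switched_along \<sigma> f ys i = f (ys ! i) * sign_prod \<sigma> ys 0 i"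

definition walk_sign :: "('a \<Rightarrow> 'a \<Rightarrow> real) \<Rightarrow> 'a list \<Rightarrow> real" where
  "walk_sign \<sigma> ys = sign_prod \<sigma> ys 0 (length ys - 1)"

definition sign_consistent ::
    "('a \<Rightarrow> 'a \<Rightarrow> real) \<Rightarrow> ('a \<Rightarrow> real) \<Rightarrow> real \<Rightarrow> 'a list \<Rightarrow> bool" where
  "sign_consistent \<sigma> f \<epsilon> ys \<longleftrightarrow> (\<forall>i<length ys. 0 \<le> \<epsilon> * switched_along \<sigma> f ys i)"

lemma switched_along_append_left:
  "i < length ys \<Longrightarrow> switched_along \<sigma> f (ys @ tl zs) i = switched_along \<sigma> f ys i"
  by (simp add: switched_along_def sign_prod_append_left nth_append)

lemma switched_along_append_right:
  assumes "ys \<noteq> []" "last ys = hd zs" "k < length zs"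
  shows "switched_along \<sigma> f (ys @ tl zs) (length ys - 1 + k)
    = walk_sign \<sigma> ys * switched_along \<sigma> f zs k"
proof -
  have "sign_prod \<sigma> (ys @ tl zs) 0 (length ys - 1 + k)
      = sign_prod \<sigma> (ys @ tl zs) 0 (length ys - 1)
        * sign_prod \<sigma> (ys @ tl zs) (length ys - 1) (length ys - 1 + k)"
    by (simp add: sign_prod_split)
  also have "\<dots> = walk_sign \<sigma> ys * sign_prod \<sigma> zs 0 k"
    using assms sign_prod_append_right[OF assms] by (simp add: walk_sign_def sign_prod_append_left)
  finally show ?thesis
    using nth_append_tl[OF assms] by (simp add: switched_along_def)
qed

lemma sign_consistent_append:
  assumes "ys \<noteq> []" "last ys = hd zs"
    and "sign_consistent \<sigma> f \<epsilon> ys" "sign_consistent \<sigma> f (\<epsilon> * walk_sign \<sigma> ys) zs"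
  shows "sign_consistent \<sigma> f \<epsilon> (ys @ tl zs)"
  unfolding sign_consistent_def
proof (intro allI impI)
  fix i assume i: "i < length (ys @ tl zs)"
  show "0 \<le> \<epsilon> * switched_along \<sigma> f (ys @ tl zs) i"
  proof (cases "i < length ys")
    case True
    then show ?thesis
      using assms(3) by (simp add: sign_consistent_def switched_along_append_left)
  next
    case False
    then obtain k where k: "i = length ys - 1 + k" "k < length zs"
      using i assms(1) by (intro that[of "i - (length ys - 1)"]) auto
    then show ?thesis
      using assms(4) switched_along_append_right[OF assms(1,2) k(2)]
      by (simp add: sign_consistent_def mult.assoc)
  qed
qed

lemma sign_consistent_if_zero_before_last:
  assumes "\<forall>i. Suc i < length ys \<longrightarrow> f (ys ! i) = 0"
    and "0 \<le> \<epsilon> * switched_along \<sigma> f ys (length ys - 1)"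
  shows "sign_consistent \<sigma> f \<epsilon> ys"
  unfolding sign_consistent_def
proof (intro allI impI)
  fix i assume "i < length ys"
  then consider "Suc i < length ys" | "i = length ys - 1" by linarith
  then show "0 \<le> \<epsilon> * switched_along \<sigma> f ys i"
    by cases (use assms in \<open>auto simp: switched_along_def\<close>)
qed

locale edge_signature =
  fixes E :: "'a \<Rightarrow> 'a \<Rightarrow> bool" and \<sigma> :: "'a \<Rightarrow> 'a \<Rightarrow> real"
  assumes edge_sym: "E a b \<Longrightarrow> E b a"
    and sign_sym: "E a b \<Longrightarrow> \<sigma> a b = \<sigma> b a"
    and sign_pm: "E a b \<Longrightarrow> \<sigma> a b \<in> {1, -1}"

lemma signed_graph_edge_signature: "signed_graph V E \<sigma> \<Longrightarrow> edge_signature E \<sigma>"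
  unfolding signed_graph_def by unfold_locales auto

context edge_signature
begin

lemma successively_rev_edges: "successively E ys \<Longrightarrow> successively E (rev ys)"
  by (auto elim: successively_mono intro: edge_sym)

lemma sign_prod_pm:
  assumes "successively E ys" "j < length ys"
  shows "sign_prod \<sigma> ys i j \<in> {1, -1}"
proof -
  have "\<bar>\<sigma> (ys ! l) (ys ! Suc l)\<bar> = 1" if "l \<in> {i..<j}" for l
    using sign_pm[OF successively_nth[OF assms(1)], of l] that assms(2) by auto
  then have "\<bar>sign_prod \<sigma> ys i j\<bar> = 1"
    unfolding sign_prod_def abs_prod by simp
  then show ?thesis by auto
qed

lemma sign_prod_rev:
  assumes "successively E ys" "i < length ys"
  shows "sign_prod \<sigma> (rev ys) 0 i = sign_prod \<sigma> ys (length ys - 1 - i) (length ys - 1)"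
  using assms(2)
proof (induction i)
  case 0
  then show ?case by (simp add: sign_prod_empty)
next
  case (Suc i)
  obtain m where m: "length ys - 1 - Suc i = m" "length ys - 1 - i = Suc m"
    using Suc.prems by (metis Suc_diff_Suc diff_Suc_eq_diff_pred)
  have edge: "E (ys ! m) (ys ! Suc m)"
    using successively_nth[OF assms(1)] Suc.prems m by simp
  have "sign_prod \<sigma> (rev ys) 0 (Suc i) = sign_prod \<sigma> (rev ys) 0 i * \<sigma> (ys ! Suc m) (ys ! m)"
    using Suc.prems m by (simp add: sign_prod_def rev_nth)
  also have "\<dots> = sign_prod \<sigma> ys m (Suc m) * sign_prod \<sigma> ys (Suc m) (length ys - 1)"
    using Suc m sign_sym[OF edge] by (simp add: sign_prod_def)
  also have "\<dots> = sign_prod \<sigma> ys m (length ys - 1)"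
    using Suc.prems m by (intro sign_prod_split[symmetric]) auto
  finally show ?case
    using m by simp
qed

lemma walk_sign_pm: "successively E ys \<Longrightarrow> walk_sign \<sigma> ys \<in> {1, -1}"
  using sign_prod_pm[of ys "length ys - 1" 0]
  by (cases "ys = []") (simp_all add: walk_sign_def sign_prod_empty)

lemma walk_sign_rev: "successively E ys \<Longrightarrow> walk_sign \<sigma> (rev ys) = walk_sign \<sigma> ys"
  by (cases "ys = []") (simp_all add: walk_sign_def sign_prod_rev)

lemma switched_along_rev:
  assumes "successively E ys" "i < length ys"
  shows "switched_along \<sigma> f (rev ys) i = walk_sign \<sigma> ys * switched_along \<sigma> f ys (length ys - 1 - i)"
proof -
  let ?m = "length ys - 1 - i"
  have "walk_sign \<sigma> ys = sign_prod \<sigma> ys 0 ?m * sign_prod \<sigma> ys ?m (length ys - 1)"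
    unfolding walk_sign_def by (simp add: sign_prod_split)
  moreover have "sign_prod \<sigma> ys 0 ?m \<in> {1, -1}"
    using assms by (intro sign_prod_pm) auto
  ultimately have "sign_prod \<sigma> ys ?m (length ys - 1) = walk_sign \<sigma> ys * sign_prod \<sigma> ys 0 ?m"
    by auto
  then show ?thesis
    using assms by (simp add: switched_along_def sign_prod_rev rev_nth)
qed

lemma sign_consistent_rev:
  assumes "successively E ys" "sign_consistent \<sigma> f \<epsilon> ys"
  shows "sign_consistent \<sigma> f (\<epsilon> * walk_sign \<sigma> ys) (rev ys)"
  unfolding sign_consistent_def
proof (intro allI impI)
  fix i assume i: "i < length (rev ys)"
  have "(\<epsilon> * walk_sign \<sigma> ys) * switched_along \<sigma> f (rev ys) i
      = (walk_sign \<sigma> ys)\<^sup>2 * (\<epsilon> * switched_along \<sigma> f ys (length ys - 1 - i))"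
    using i by (simp add: switched_along_rev[OF assms(1)] power2_eq_square)
  also have "\<dots> = \<epsilon> * switched_along \<sigma> f ys (length ys - 1 - i)"
    using walk_sign_pm[OF assms(1)] by auto
  finally show "0 \<le> (\<epsilon> * walk_sign \<sigma> ys) * switched_along \<sigma> f (rev ys) i"
    using assms(2) i by (simp only: sign_consistent_def) simp
qed

lemma switched_along_eq_0_iff:
  "successively E ys \<Longrightarrow> i < length ys \<Longrightarrow> switched_along \<sigma> f ys i = 0 \<longleftrightarrow> f (ys ! i) = 0"
  using sign_prod_pm[of ys i 0] by (auto simp: switched_along_def)

lemma switched_along_mult:
  assumes "successively E ys" "i \<le> j" "j < length ys"
  shows "switched_along \<sigma> f ys i * switched_along \<sigma> f ys j
    = f (ys ! i) * sign_prod \<sigma> ys i j * f (ys ! j)"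
proof -
  have "(sign_prod \<sigma> ys 0 i)\<^sup>2 = 1"
    using sign_prod_pm[of ys i 0] assms by auto
  then show ?thesis
    using assms(2)
    by (simp add: switched_along_def sign_prod_split[of 0 i j] power2_eq_square algebra_simps)
qed

section \<open>W-walks\<close>

lemma is_W_walk_iff_sign_consistent:
  "is_W_walk E \<sigma> f ys \<longleftrightarrow> is_walk E ys \<and> (\<exists>\<epsilon>\<in>{1, -1}. sign_consistent \<sigma> f \<epsilon> ys)"
proof (cases "is_walk E ys")
  case True
  then have walk: "successively E ys"
    by (simp add: is_walk_iff_successively)
  let ?g = "switched_along \<sigma> f ys"
  have "(i < j \<and> j < length ys \<and> f (ys ! i) \<noteq> 0 \<and> f (ys ! j) \<noteq> 0
        \<and> (\<forall>l. i < l \<and> l < j \<longrightarrow> f (ys ! l) = 0) \<longrightarrow> f (ys ! i) * sign_prod \<sigma> ys i j * f (ys ! j) > 0)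
    \<longleftrightarrow> (i < j \<and> j < length ys \<and> ?g i \<noteq> 0 \<and> ?g j \<noteq> 0
        \<and> (\<forall>l. i < l \<and> l < j \<longrightarrow> ?g l = 0) \<longrightarrow> 0 < ?g i * ?g j)" for i j
    using switched_along_eq_0_iff[OF walk] switched_along_mult[OF walk, of i j]
    by (cases "i < j \<and> j < length ys") auto
  then show ?thesis
    unfolding is_W_walk_def sign_consistent_def common_sign_iff_consecutive_nonzero_pos
    using True by presburger
qed (simp add: is_W_walk_def)

lemma W_walk_from_to_iff:
  "W_walk_from_to E \<sigma> f a b \<longleftrightarrow> (\<exists>ys. \<exists>\<epsilon>\<in>{1, -1}.
     is_walk E ys \<and> hd ys = a \<and> last ys = b \<and> sign_consistent \<sigma> f \<epsilon> ys)"
  unfolding W_walk_from_to_def is_W_walk_iff_sign_consistent by blast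

lemma W_walk_from_to_sym:
  assumes "W_walk_from_to E \<sigma> f a b"
  shows "W_walk_from_to E \<sigma> f b a"
proof -
  obtain ys \<epsilon> where ys: "is_walk E ys" "hd ys = a" "last ys = b" "\<epsilon> \<in> {1, -1}"
    "sign_consistent \<sigma> f \<epsilon> ys"
    using assms by (auto simp: W_walk_from_to_iff)
  then have walk: "successively E ys" "ys \<noteq> []"
    by (auto simp: is_walk_iff_successively)
  have "is_walk E (rev ys)"
    using ys(1) successively_rev_edges by (simp add: is_walk_iff_successively)
  moreover have "sign_consistent \<sigma> f (\<epsilon> * walk_sign \<sigma> ys) (rev ys)"
    using walk(1) ys(5) by (rule sign_consistent_rev)
  moreover have "\<epsilon> * walk_sign \<sigma> ys \<in> {1, -1}"
    using ys(4) walk_sign_pm[OF walk(1)] by auto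
  ultimately show ?thesis
    unfolding W_walk_from_to_iff using ys walk by (auto simp: hd_rev last_rev)
qed

lemma W_walk_from_to_trans:
  assumes "W_walk_from_to E \<sigma> f a b" "W_walk_from_to E \<sigma> f b c" "f b \<noteq> 0"
  shows "W_walk_from_to E \<sigma> f a c"
proof -
  obtain ys \<epsilon> where ys: "is_walk E ys" "hd ys = a" "last ys = b" "\<epsilon> \<in> {1, -1}"
    "sign_consistent \<sigma> f \<epsilon> ys"
    using assms(1) by (auto simp: W_walk_from_to_iff)
  obtain zs \<delta> where zs: "is_walk E zs" "hd zs = b" "last zs = c" "\<delta> \<in> {1, -1}"
    "sign_consistent \<sigma> f \<delta> zs"
    using assms(2) by (auto simp: W_walk_from_to_iff)
  have walk: "successively E ys" "ys \<noteq> []" "zs \<noteq> []"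
    using ys(1) zs(1) by (auto simp: is_walk_iff_successively)
  have "0 \<le> \<epsilon> * (f b * walk_sign \<sigma> ys)"
    using ys(3,5) walk(2)
    by (auto simp: sign_consistent_def switched_along_def walk_sign_def last_conv_nth)
  moreover have "0 \<le> \<delta> * f b"
    using zs(2,5) walk(3)
    by (auto simp: sign_consistent_def switched_along_def sign_prod_empty hd_conv_nth)
  ultimately have "\<delta> = \<epsilon> * walk_sign \<sigma> ys"
    using assms(3) ys(4) zs(4) walk_sign_pm[OF walk(1)]
    by (auto simp: mult_le_0_iff zero_le_mult_iff)
  then have "sign_consistent \<sigma> f \<epsilon> (ys @ tl zs)"
    using ys(3,5) zs(2,5) walk(2) by (intro sign_consistent_append) auto
  moreover have "is_walk E (ys @ tl zs)"
    using walk ys(3) zs(1,2) by (intro is_walk_append_tl) auto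
  moreover have "hd (ys @ tl zs) = a" "last (ys @ tl zs) = c"
    using ys(2) zs(1,3) walk(2) by (auto simp: is_walk_def last_append_tl)
  ultimately show ?thesis
    unfolding W_walk_from_to_iff using ys(4) by blast
qed

lemma W_walk_from_to_join:
  assumes "successively E ys" "ys \<noteq> []" "is_walk E zs" "hd ys = hd zs" "\<epsilon> \<in> {1, -1}"
    and "sign_consistent \<sigma> f \<epsilon> ys" "sign_consistent \<sigma> f \<epsilon> zs"
  shows "W_walk_from_to E \<sigma> f (last ys) (last zs)"
proof -
  let ?s = "walk_sign \<sigma> ys"
  have s: "?s \<in> {1, -1}"
    using assms(1) by (rule walk_sign_pm)
  have "sign_consistent \<sigma> f (\<epsilon> * ?s * walk_sign \<sigma> (rev ys)) zs"
    using assms(7) s by (auto simp: walk_sign_rev[OF assms(1)])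
  then have "sign_consistent \<sigma> f (\<epsilon> * ?s) (rev ys @ tl zs)"
    using assms sign_consistent_rev by (intro sign_consistent_append) (auto simp: last_rev)
  moreover have "is_walk E (rev ys @ tl zs)"
    using assms successively_rev_edges by (intro is_walk_append_tl) (auto simp: last_rev)
  moreover have "hd (rev ys @ tl zs) = last ys" "last (rev ys @ tl zs) = last zs"
    using assms(2,3) by (auto simp: hd_rev is_walk_def last_append_tl)
  moreover have "\<epsilon> * ?s \<in> {1, -1}"
    using assms(5) s by auto
  ultimately show ?thesis
    unfolding W_walk_from_to_iff by blast
qed

lemma W_walk_from_B_set_to_either_end:
  assumes "y \<in> B_set E f x" "\<epsilon> \<in> {1, -1}"
    and "is_walk E P" "hd P = x" "sign_consistent \<sigma> f \<epsilon> P"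
    and "is_walk E Q" "hd Q = x" "sign_consistent \<sigma> f (- \<epsilon>) Q"
  shows "W_walk_from_to E \<sigma> f y (last P) \<or> W_walk_from_to E \<sigma> f y (last Q)"
proof -
  obtain R where R: "R \<noteq> []" "hd R = x" "last R = y"
    and steps: "\<forall>i. Suc i < length R \<longrightarrow> E (R ! i) (R ! Suc i) \<and> f (R ! i) = 0"
    using assms(1) unfolding B_set_def by blast
  have walk: "successively E R"
    using steps by (simp add: successively_conv_nth)
  have zero: "\<forall>i. Suc i < length R \<longrightarrow> f (R ! i) = 0"
    using steps by blast
  consider "0 \<le> \<epsilon> * switched_along \<sigma> f R (length R - 1)"
    | "0 \<le> - \<epsilon> * switched_along \<sigma> f R (length R - 1)"
    by linarith
  then show ?thesis
  proof cases
    case 1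
    then have "sign_consistent \<sigma> f \<epsilon> R"
      using zero by (intro sign_consistent_if_zero_before_last)
    then show ?thesis
      using W_walk_from_to_join[OF walk R(1) assms(3) _ _ _ assms(5)] assms(2,4) R by simp
  next
    case 2
    then have "sign_consistent \<sigma> f (- \<epsilon>) R"
      using zero by (intro sign_consistent_if_zero_before_last)
    then show ?thesis
      using W_walk_from_to_join[OF walk R(1) assms(6) _ _ _ assms(8)] assms(2,7) R by auto
  qed
qed

end

section \<open>Weak nodal domains\<close>

definition weak_domain ::
    "'a set \<Rightarrow> ('a \<Rightarrow> 'a \<Rightarrow> bool) \<Rightarrow> ('a \<Rightarrow> 'a \<Rightarrow> real) \<Rightarrow> ('a \<Rightarrow> real) \<Rightarrow> 'a set \<Rightarrow> 'a set" where
  "weak_domain V E \<sigma> f C = C \<union> {x \<in> V. \<exists>z \<in> C. W_walk_from_to E \<sigma> f x z}"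

lemma weak_nodal_domain_iff:
  "weak_nodal_domain V E \<sigma> f D \<longleftrightarrow> (\<exists>w \<in> V. f w \<noteq> 0 \<and> D = weak_domain V E \<sigma> f (W_class V E \<sigma> f w))"
  by (simp add: weak_nodal_domain_def weak_domain_def)

lemma mem_weak_domainI:
  assumes "signed_graph V E \<sigma>" "W_walk_from_to E \<sigma> f y z" "z \<in> C"
  shows "y \<in> weak_domain V E \<sigma> f C"
proof -
  obtain ys where ys: "is_walk E ys" "hd ys = y"
    using assms(2) by (auto simp: W_walk_from_to_def is_W_walk_def)
  then have "E (ys ! 0) (ys ! 1)" "ys \<noteq> []"
    by (auto simp: is_walk_def)
  then have "E y (ys ! 1)"
    using ys(2) by (simp add: hd_conv_nth)
  then have "y \<in> V"
    using assms(1) by (auto simp: signed_graph_def)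
  then show ?thesis
    using assms(2,3) by (auto simp: weak_domain_def)
qed

lemma neighbours_subset_B_set:
  assumes "f x = 0"
  shows "{y. E x y} \<subseteq> B_set E f x"
proof
  fix y assume "y \<in> {y. E x y}"
  then show "y \<in> B_set E f x"
    using assms unfolding B_set_def
    by (intro CollectI exI[of _ "[x, y]"]) (auto simp: nth_Cons split: nat.splits)
qed

context edge_signature
begin

context
  fixes V :: "'a set" and f :: "'a \<Rightarrow> real"
begin

lemma W_class_eq_if_mem:
  assumes "f w \<noteq> 0" "z \<in> W_class V E \<sigma> f w"
  shows "W_class V E \<sigma> f z = W_class V E \<sigma> f w"
proof -
  have "z = w \<or> W_walk_from_to E \<sigma> f w z \<and> W_walk_from_to E \<sigma> f z w" "f z \<noteq> 0"
    using assms(2) W_walk_from_to_sym by (auto simp: W_class_def)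
  then show ?thesis
    using assms(1) W_walk_from_to_trans unfolding W_class_def by blast
qed

lemma mem_W_class_if_nonzero:
  assumes "f w \<noteq> 0" "f x \<noteq> 0" "x \<in> weak_domain V E \<sigma> f (W_class V E \<sigma> f w)"
  shows "x \<in> W_class V E \<sigma> f w"
proof (cases "x \<in> W_class V E \<sigma> f w")
  case False
  then obtain z where z: "x \<in> V" "z \<in> W_class V E \<sigma> f w" "W_walk_from_to E \<sigma> f x z"
    using assms(3) by (auto simp: weak_domain_def)
  then have "x \<in> W_class V E \<sigma> f z"
    using assms(2) W_walk_from_to_sym by (auto simp: W_class_def)
  then show ?thesis
    using W_class_eq_if_mem[OF assms(1) z(2)] by simp
qed

lemma zero_if_mem_two_weak_domains:
  assumes "f w \<noteq> 0" "f w' \<noteq> 0" "W_class V E \<sigma> f w \<noteq> W_class V E \<sigma> f w'"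
    and "x \<in> weak_domain V E \<sigma> f (W_class V E \<sigma> f w)" "x \<in> weak_domain V E \<sigma> f (W_class V E \<sigma> f w')"
  shows "f x = 0"
proof (rule ccontr)
  assume "f x \<noteq> 0"
  then have "x \<in> W_class V E \<sigma> f w" "x \<in> W_class V E \<sigma> f w'"
    using assms mem_W_class_if_nonzero by blast+
  then show False
    using assms(3) W_class_eq_if_mem[OF assms(1)] W_class_eq_if_mem[OF assms(2)] by metis
qed

lemma opposite_sign_walks_to_two_classes:
  assumes "f w \<noteq> 0" "f w' \<noteq> 0" "W_class V E \<sigma> f w \<noteq> W_class V E \<sigma> f w'"
    and "x \<in> weak_domain V E \<sigma> f (W_class V E \<sigma> f w)" "x \<in> weak_domain V E \<sigma> f (W_class V E \<sigma> f w')"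
  obtains \<epsilon> P Q where "\<epsilon> \<in> {1, -1}"
    "is_walk E P" "hd P = x" "last P \<in> W_class V E \<sigma> f w" "sign_consistent \<sigma> f \<epsilon> P"
    "is_walk E Q" "hd Q = x" "last Q \<in> W_class V E \<sigma> f w'" "sign_consistent \<sigma> f (- \<epsilon>) Q"
proof -
  have "x \<notin> W_class V E \<sigma> f w" "x \<notin> W_class V E \<sigma> f w'"
    using zero_if_mem_two_weak_domains[OF assms] by (auto simp: W_class_def)
  then obtain z z' where
    z: "z \<in> W_class V E \<sigma> f w" "W_walk_from_to E \<sigma> f x z" and
    z': "z' \<in> W_class V E \<sigma> f w'" "W_walk_from_to E \<sigma> f x z'"
    using assms(4,5) by (auto simp: weak_domain_def)
  obtain P \<epsilon> where P: "\<epsilon> \<in> {1, -1}" "is_walk E P" "hd P = x" "last P = z" "sign_consistent \<sigma> f \<epsilon> P"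
    using z(2) by (auto simp: W_walk_from_to_iff)
  obtain Q \<delta> where Q: "\<delta> \<in> {1, -1}" "is_walk E Q" "hd Q = x" "last Q = z'" "sign_consistent \<sigma> f \<delta> Q"
    using z'(2) by (auto simp: W_walk_from_to_iff)
  have "\<delta> \<noteq> \<epsilon>"
  proof
    assume "\<delta> = \<epsilon>"
    moreover have "successively E P" "P \<noteq> []"
      using P(2) by (auto simp: is_walk_iff_successively)
    ultimately have "W_walk_from_to E \<sigma> f z z'"
      using W_walk_from_to_join[of P Q \<epsilon>] P Q by simp
    then have "z' \<in> W_class V E \<sigma> f z"
      using z'(1) by (auto simp: W_class_def)
    moreover have "f z \<noteq> 0" "f z' \<noteq> 0"
      using z(1) z'(1) by (auto simp: W_class_def)
    ultimately show False
      using W_class_eq_if_mem[OF assms(1) z(1)] W_class_eq_if_mem[OF assms(2) z'(1)]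
        W_class_eq_if_mem assms(3) by metis
  qed
  then have "\<delta> = - \<epsilon>"
    using P(1) Q(1) by auto
  then show thesis
    using that P Q z z' by blast
qed

end

end

lemma B_set_subset_weak_domains:
  assumes "signed_graph V E \<sigma>" "f w \<noteq> 0" "f w' \<noteq> 0" "W_class V E \<sigma> f w \<noteq> W_class V E \<sigma> f w'"
    and "x \<in> weak_domain V E \<sigma> f (W_class V E \<sigma> f w)"
    and "x \<in> weak_domain V E \<sigma> f (W_class V E \<sigma> f w')"
  shows "B_set E f x
    \<subseteq> weak_domain V E \<sigma> f (W_class V E \<sigma> f w) \<union> weak_domain V E \<sigma> f (W_class V E \<sigma> f w')"
proof
  interpret edge_signature E \<sigma>
    using assms(1) by (rule signed_graph_edge_signature)
  obtain \<epsilon> P Q where walks: "\<epsilon> \<in> {1, -1}"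
    "is_walk E P" "hd P = x" "last P \<in> W_class V E \<sigma> f w" "sign_consistent \<sigma> f \<epsilon> P"
    "is_walk E Q" "hd Q = x" "last Q \<in> W_class V E \<sigma> f w'" "sign_consistent \<sigma> f (- \<epsilon>) Q"
    using assms(2-) by (rule opposite_sign_walks_to_two_classes)
  fix y assume "y \<in> B_set E f x"
  then have "W_walk_from_to E \<sigma> f y (last P) \<or> W_walk_from_to E \<sigma> f y (last Q)"
    using walks(1-3,5-7,9) by (rule W_walk_from_B_set_to_either_end)
  then show "y \<in> weak_domain V E \<sigma> f (W_class V E \<sigma> f w) \<union> weak_domain V E \<sigma> f (W_class V E \<sigma> f w')"
    using mem_weak_domainI[OF assms(1) _ walks(4)] mem_weak_domainI[OF assms(1) _ walks(8)] by blast
qed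

theorem corollary3p9:
  fixes V :: "'a set" and E :: "'a \<Rightarrow> 'a \<Rightarrow> bool" and \<sigma> :: "'a \<Rightarrow> 'a \<Rightarrow> real"
    and f :: "'a \<Rightarrow> real" and x :: 'a and D D' :: "'a set"
  assumes "signed_graph V E \<sigma>"
    and "\<exists>v \<in> V. f v \<noteq> 0"
    and "x \<in> V"
    and "weak_nodal_domain V E \<sigma> f D" and "weak_nodal_domain V E \<sigma> f D'"
    and "D \<noteq> D'"
    and "x \<in> D" and "x \<in> D'"
  shows "B_set E f x \<subseteq> D \<union> D' \<and> {y \<in> V. E x y} \<subseteq> D \<union> D'"
proof -
  (* The hypotheses that f does not vanish identically and that x \<in> V follow from the others. *)
  interpret edge_signature E \<sigma>
    using assms(1) by (rule signed_graph_edge_signature)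
  obtain w w' where w: "f w \<noteq> 0" "D = weak_domain V E \<sigma> f (W_class V E \<sigma> f w)"
    and w': "f w' \<noteq> 0" "D' = weak_domain V E \<sigma> f (W_class V E \<sigma> f w')"
    using assms(4,5) unfolding weak_nodal_domain_iff by blast
  have classes: "W_class V E \<sigma> f w \<noteq> W_class V E \<sigma> f w'"
    using assms(6) w(2) w'(2) by auto
  have x: "x \<in> weak_domain V E \<sigma> f (W_class V E \<sigma> f w)"
    "x \<in> weak_domain V E \<sigma> f (W_class V E \<sigma> f w')"
    using assms(7,8) w(2) w'(2) by simp_all
  have "f x = 0"
    using zero_if_mem_two_weak_domains[OF w(1) w'(1) classes x] .
  then have "{y \<in> V. E x y} \<subseteq> B_set E f x"
    using neighbours_subset_B_set[of f x E] by auto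
  moreover have "B_set E f x \<subseteq> D \<union> D'"
    using B_set_subset_weak_domains[OF assms(1) w(1) w'(1) classes x] w(2) w'(2) by simp
  ultimately show ?thesis
    by blast
qed

end
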